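(* There exists an outerplanar graph whose track number is exactly $5$ (i.e. it has no $4$-track layout).
   Context: A $t$-track assignment of a graph $G$ is a partition of $V(G)$ into $t$ sets $V_1,\dots,V_t$ (tracks), each an independent set of $G$, together with a total order $<_i$ on each $V_i$. An X-crossing consists of two edges $(u,v)$ and $(x,y)$ with $u,x\in V_i$, $v,y\in V_j$ ($i\neq j$), $u<_i x$ and $y<_j v$. A $t$-track layout is a $t$-track assignment with no X-crossing; the track number $\mathrm{tn}(G)$ is the minimum $t$ for which $G$ has a $t$-track layout. *)

theory Defs
  imports "HOL-Analysis.Analysis"
begin

definition simple_graph :: "'a set \<Rightarrow> ('a \<times> 'a) set \<Rightarrow> bool" where
  "simple_graph V E \<longleftrightarrow> finite V \<and> E \<subseteq> V \<times> V \<and> sym E \<and> irrefl E"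

definition track_layout :: "'a set \<Rightarrow> ('a \<times> 'a) set \<Rightarrow> nat \<Rightarrow> bool" where
  "track_layout V E t \<longleftrightarrow>
    (\<exists>(trk :: 'a \<Rightarrow> nat) (ord :: nat \<Rightarrow> ('a \<times> 'a) set).
       (\<forall>v\<in>V. trk v < t)
     \<and> (\<forall>(u, v)\<in>E. trk u \<noteq> trk v)
     \<and> (\<forall>i<t. ord i \<subseteq> {v\<in>V. trk v = i} \<times> {v\<in>V. trk v = i}
              \<and> strict_linear_order_on {v\<in>V. trk v = i} (ord i))
     \<and> (\<forall>u v x y. (u, v) \<in> E \<longrightarrow> (x, y) \<in> E \<longrightarrow>
            trk u = trk x \<longrightarrow> trk v = trk y \<longrightarrow> trk u \<noteq> trk v \<longrightarrow>
            \<not> ((u, x) \<in> ord (trk u) \<and> (y, v) \<in> ord (trk v))))"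

definition track_number :: "'a set \<Rightarrow> ('a \<times> 'a) set \<Rightarrow> nat" where
  "track_number V E = (LEAST t. track_layout V E t)"

definition plane_embedding ::
  "'a set \<Rightarrow> ('a \<times> 'a) set \<Rightarrow> ('a \<Rightarrow> real^2) \<Rightarrow> ('a \<Rightarrow> 'a \<Rightarrow> real \<Rightarrow> real^2) \<Rightarrow> bool" where
  "plane_embedding V E p \<gamma> \<longleftrightarrow>
     inj_on p V
   \<and> (\<forall>(u, v)\<in>E. arc (\<gamma> u v) \<and> pathstart (\<gamma> u v) = p u \<and> pathfinish (\<gamma> u v) = p v
                 \<and> path_image (\<gamma> v u) = path_image (\<gamma> u v))
   \<and> (\<forall>(u, v)\<in>E. \<forall>w\<in>V. w \<noteq> u \<and> w \<noteq> v \<longrightarrow> p w \<notin> path_image (\<gamma> u v))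
   \<and> (\<forall>(u, v)\<in>E. \<forall>(x, y)\<in>E. {u, v} \<noteq> {x, y} \<longrightarrow>
        path_image (\<gamma> u v) \<inter> path_image (\<gamma> x y) \<subseteq> p ` ({u, v} \<inter> {x, y}))"

definition drawing :: "'a set \<Rightarrow> ('a \<times> 'a) set \<Rightarrow> ('a \<Rightarrow> real^2) \<Rightarrow> ('a \<Rightarrow> 'a \<Rightarrow> real \<Rightarrow> real^2) \<Rightarrow> (real^2) set" where
  "drawing V E p \<gamma> = p ` V \<union> (\<Union>(u, v)\<in>E. path_image (\<gamma> u v))"

definition outerplanar :: "'a set \<Rightarrow> ('a \<times> 'a) set \<Rightarrow> bool" where
  "outerplanar V E \<longleftrightarrow>
    (\<exists>p \<gamma> z. plane_embedding V E p \<gamma> \<and> z \<notin> drawing V E p \<gamma>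
        \<and> \<not> bounded (connected_component_set (- drawing V E p \<gamma>) z)
        \<and> (\<forall>v\<in>V. p v \<in> closure (connected_component_set (- drawing V E p \<gamma>) z)))"

end

theory Submission
  imports Defs
begin

text \<open>
  The example is the maximal outerplanar graph on the cycle \<open>0, 1, \<dots>, 11\<close> consisting of the
  central triangle \<open>0 4 8\<close> with a fan of three triangles glued to each of its sides.

  Outerplanarity: put vertex \<open>v\<close> at \<open>(v, 0)\<close> and draw every edge as a parabolic arc above the
  interval spanned by its ends. Since no two edges have interleaving ends, two arcs meet only in
  common ends, and the whole drawing lies in the closed upper half-plane, so the open lower
  half-plane lies in the outer face and every vertex is on its boundary.

  Track number: a 5-track layout is given explicitly. Conversely, a 4-track layout yields a track
  assignment and, on every track, a total relation without X-crossings. The resulting propositional problem is unsatisfiable,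
  which is checked by a SAT solver on a small set of its clauses.
\<close>

section \<open>Graphs drawn with non-crossing chords are outerplanar\<close>

definition point :: "real \<Rightarrow> real \<Rightarrow> real^2" where
  "point x y = vector [x, y]"

lemma point_nth [simp]: "point x y $ 1 = x" "point x y $ 2 = y"
  by (simp_all add: point_def)

lemma point_eq_iff [simp]: "point a b = point c d \<longleftrightarrow> a = c \<and> b = d"
  by (auto simp: vec_eq_iff forall_2)

lemma continuous_on_point [continuous_intros]:
  assumes "continuous_on S f" "continuous_on S g"
  shows "continuous_on S (\<lambda>t. point (f t) (g t))"
proof -
  have "point (f t) (g t) = f t *\<^sub>R point 1 0 + g t *\<^sub>R point 0 1" for t
    by (simp add: vec_eq_iff forall_2)
  then show ?thesis
    using assms by (simp only:) (intro continuous_intros)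
qed

definition cap :: "real \<Rightarrow> real \<Rightarrow> (real^2) set" where
  "cap a b = (\<lambda>x. point x ((x - a) * (b - x))) ` {a..b}"

definition cap_path :: "real \<Rightarrow> real \<Rightarrow> real \<Rightarrow> real^2" where
  "cap_path a b t = point (a + t * (b - a)) (t * (1 - t) * (b - a)\<^sup>2)"

lemma pathstart_cap_path [simp]: "pathstart (cap_path a b) = point a 0"
  and pathfinish_cap_path [simp]: "pathfinish (cap_path a b) = point b 0"
  by (simp_all add: pathstart_def pathfinish_def cap_path_def)

lemma arc_cap_path:
  assumes "a < b"
  shows "arc (cap_path a b)"
  unfolding arc_def path_def
proof
  show "continuous_on {0..1} (cap_path a b)"
    unfolding cap_path_def by (intro continuous_intros)
  show "inj_on (cap_path a b) {0..1}"
    using assms by (auto simp: inj_on_def cap_path_def)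
qed

lemma path_image_cap_path:
  assumes "a < b"
  shows "path_image (cap_path a b) = cap a b"
proof -
  have "cap_path a b = (\<lambda>x. point x ((x - a) * (b - x))) \<circ> (\<lambda>t. (b - a) * t + a)"
    by (simp add: fun_eq_iff cap_path_def power2_eq_square algebra_simps)
  moreover have "(\<lambda>t. (b - a) * t + a) ` {0..1} = {a..b}"
    using assms by (simp add: image_affinity_atLeastAtMost)
  ultimately show ?thesis
    unfolding path_image_def cap_def by (simp only: image_comp[symmetric])
qed

lemma cap_nonneg_height: "z \<in> cap a b \<Longrightarrow> 0 \<le> z $ 2"
  by (auto simp: cap_def)

lemma axis_point_in_cap: "point x 0 \<in> cap a b \<Longrightarrow> x = a \<or> x = b"
  by (auto simp: cap_def)

lemma cap_inter_cap_disjoint: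
  assumes "b \<le> c" "z \<in> cap a b" "z \<in> cap c d"
  shows "\<exists>x\<in>{a, b} \<inter> {c, d}. z = point x 0"
  using assms by (auto simp: cap_def)

lemma cap_inter_cap_nested:
  assumes "a \<le> c" "d \<le> b" "c < d" "(a, b) \<noteq> (c, d)" "z \<in> cap a b" "z \<in> cap c d"
  shows "\<exists>x\<in>{a, b} \<inter> {c, d}. z = point x 0"
proof -
  obtain x where x: "c \<le> x" "x \<le> d" "z = point x ((x - c) * (d - x))"
    using assms(6) by (auto simp: cap_def)
  have same_height: "(x - a) * (b - x) = (x - c) * (d - x)"
    using assms(5) x(3) by (auto simp: cap_def)
  show ?thesis
  proof (cases "x = c \<or> x = d")
    case True
    then have "x = a \<or> x = b"
      using same_height by auto
    with True x(3) show ?thesis by auto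
  next
    case False
    define D where "D y = (y - a) * (b - y) - (y - c) * (d - y)" for y
    have D_affine: "(d - c) * D x = (d - x) * D c + (x - c) * D d"
      by (simp add: D_def algebra_simps)
    have "D x = 0" "D c \<ge> 0" "D d \<ge> 0"
      using same_height assms(1-3) by (simp_all add: D_def)
    moreover have "d - x > 0" "x - c > 0"
      using False x by auto
    ultimately have "(d - x) * D c = 0" "(x - c) * D d = 0"
      using D_affine by (simp_all add: add_nonneg_eq_0_iff)
    then have "D c = 0" "D d = 0"
      using \<open>d - x > 0\<close> \<open>x - c > 0\<close> by simp_all
    then have "c = a" "d = b"
      using assms(1-3) by (auto simp: D_def)
    with assms(4) show ?thesis by simp
  qed
qed

definition intervals_cross :: "'a::linorder \<Rightarrow> 'a \<Rightarrow> 'a \<Rightarrow> 'a \<Rightarrow> bool" where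
  "intervals_cross a b c d \<longleftrightarrow> a < c \<and> c < b \<and> b < d \<or> c < a \<and> a < d \<and> d < b"

lemma cap_inter_cap:
  assumes "a < b" "c < d" "(a, b) \<noteq> (c, d)" "\<not> intervals_cross a b c d"
    and "z \<in> cap a b" "z \<in> cap c d"
  shows "\<exists>x\<in>{a, b} \<inter> {c, d}. z = point x 0"
proof -
  consider "b \<le> c" | "d \<le> a" | "a \<le> c \<and> d \<le> b" | "c \<le> a \<and> b \<le> d"
    using assms(1,2,4) unfolding intervals_cross_def by linarith
  then show ?thesis
  proof cases
    case 1
    then show ?thesis using cap_inter_cap_disjoint assms(5,6) by blast
  next
    case 2
    then show ?thesis using cap_inter_cap_disjoint assms(5,6) by blast
  next
    case 3
    then show ?thesis using cap_inter_cap_nested assms by blast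
  next
    case 4
    then show ?thesis using cap_inter_cap_nested[of c a b d] assms by auto
  qed
qed

lemma component_below_upper_halfplane_set:
  assumes "D \<subseteq> {z. 0 \<le> z $ 2}"
  defines "C \<equiv> connected_component_set (- D) (point 0 (-1))"
  shows "point 0 (-1) \<notin> D" and "\<not> bounded C" and "point x 0 \<in> closure C"
proof -
  define H :: "(real^2) set" where "H = {z. z $ 2 < 0}"
  have "H \<subseteq> - D"
    using assms(1) by (auto simp: H_def)
  moreover have "point 0 (-1) \<in> H"
    by (simp add: H_def)
  moreover have "connected H"
  proof -
    have "H = {z. axis 2 1 \<bullet> z < 0}"
      by (simp add: H_def cart_eq_inner_axis inner_commute)
    then show ?thesis
      by (simp add: convex_connected convex_halfspace_lt)
  qed
  ultimately have "H \<subseteq> C"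
    unfolding C_def by (intro connected_component_maximal)
  show "point 0 (-1) \<notin> D"
    using \<open>H \<subseteq> - D\<close> \<open>point 0 (-1) \<in> H\<close> by blast
  show "\<not> bounded C"
  proof
    assume "bounded C"
    then obtain B where B: "\<And>z. z \<in> H \<Longrightarrow> norm z \<le> B"
      using \<open>H \<subseteq> C\<close> bounded_subset by (metis bounded_iff subsetD)
    have "\<bar>point (\<bar>B\<bar> + 1) (-1) $ 1\<bar> \<le> norm (point (\<bar>B\<bar> + 1) (-1))"
      by (rule component_le_norm_cart)
    also have "\<dots> \<le> B"
      by (rule B) (simp add: H_def)
    finally show False by simp
  qed
  have "point x 0 \<in> closure H"
    by (simp add: H_def)
  then show "point x 0 \<in> closure C"
    using closure_mono[OF \<open>H \<subseteq> C\<close>] by blast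
qed

definition chord_path :: "('a \<Rightarrow> real) \<Rightarrow> 'a \<Rightarrow> 'a \<Rightarrow> real \<Rightarrow> real^2" where
  "chord_path pos u v =
     (if pos u < pos v then cap_path (pos u) (pos v) else reversepath (cap_path (pos v) (pos u)))"

lemma
  assumes "pos u \<noteq> pos v"
  shows arc_chord_path: "arc (chord_path pos u v)"
    and pathstart_chord_path: "pathstart (chord_path pos u v) = point (pos u) 0"
    and pathfinish_chord_path: "pathfinish (chord_path pos u v) = point (pos v) 0"
    and path_image_chord_path:
      "path_image (chord_path pos u v) = cap (min (pos u) (pos v)) (max (pos u) (pos v))"
  using assms
  by (auto simp: chord_path_def arc_cap_path arc_reversepath path_image_cap_path min_def max_def)

lemma path_image_chord_path_commute:
  "pos u \<noteq> pos v \<Longrightarrow> path_image (chord_path pos v u) = path_image (chord_path pos u v)"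
  using path_image_chord_path[of pos u v] path_image_chord_path[of pos v u]
  by (metis min.commute max.commute)

lemma axis_point_on_chord_path:
  assumes "pos u \<noteq> pos v" and "point p 0 \<in> path_image (chord_path pos u v)"
  shows "p = pos u \<or> p = pos v"
proof -
  have "p = min (pos u) (pos v) \<or> p = max (pos u) (pos v)"
    using assms axis_point_in_cap path_image_chord_path[of pos u v] by simp
  then show ?thesis
    by (auto simp: min_def max_def split: if_splits)
qed

lemma chord_paths_meet_at_endpoints:
  fixes pos :: "'a \<Rightarrow> real"
  assumes inj: "inj_on pos {u, v, x, y}" and "u \<noteq> v" "x \<noteq> y" and "{u, v} \<noteq> {x, y}"
    and "\<not> intervals_cross
          (min (pos u) (pos v)) (max (pos u) (pos v)) (min (pos x) (pos y)) (max (pos x) (pos y))"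
  shows "path_image (chord_path pos u v) \<inter> path_image (chord_path pos x y)
           \<subseteq> (\<lambda>v. point (pos v) 0) ` ({u, v} \<inter> {x, y})"
proof
  fix z assume z: "z \<in> path_image (chord_path pos u v) \<inter> path_image (chord_path pos x y)"
  have "pos u \<noteq> pos v" "pos x \<noteq> pos y"
    using assms(1-3) by (auto dest: inj_onD)
  have ends: "{min p q, max p q} = {p, q}" for p q :: real
    by (auto simp: min_def max_def)
  have distinct: "(min (pos u) (pos v), max (pos u) (pos v)) \<noteq> (min (pos x) (pos y), max (pos x) (pos y))"
  proof
    assume "(min (pos u) (pos v), max (pos u) (pos v)) = (min (pos x) (pos y), max (pos x) (pos y))"
    then have "pos ` {u, v} = pos ` {x, y}"
      using ends[of "pos u" "pos v"] ends[of "pos x" "pos y"] by simp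
    then have "{u, v} = {x, y}"
      by (subst (asm) inj_on_image_eq_iff[OF inj]) auto
    with assms(4) show False ..
  qed
  have ordered: "min (pos u) (pos v) < max (pos u) (pos v)" "min (pos x) (pos y) < max (pos x) (pos y)"
    using \<open>pos u \<noteq> pos v\<close> \<open>pos x \<noteq> pos y\<close> by (simp_all add: min_def max_def)
  have on_caps: "z \<in> cap (min (pos u) (pos v)) (max (pos u) (pos v))"
      "z \<in> cap (min (pos x) (pos y)) (max (pos x) (pos y))"
    using z path_image_chord_path[of pos u v] path_image_chord_path[of pos x y] \<open>pos u \<noteq> pos v\<close> \<open>pos x \<noteq> pos y\<close>
    by auto
  obtain p where "p \<in> {pos u, pos v} \<inter> {pos x, pos y}" "z = point p 0"
    using cap_inter_cap[OF ordered distinct assms(5) on_caps] unfolding ends by blast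
  have "p \<in> pos ` {u, v}" "p \<in> pos ` {x, y}"
    using \<open>p \<in> {pos u, pos v} \<inter> {pos x, pos y}\<close> by auto
  then obtain w w' where w: "w \<in> {u, v}" "pos w = p" and w': "w' \<in> {x, y}" "pos w' = p"
    by (metis imageE)
  have "w = w'"
    using inj_onD[OF inj, of w w'] w w' by auto
  then show "z \<in> (\<lambda>v. point (pos v) 0) ` ({u, v} \<inter> {x, y})"
    using w w' \<open>z = point p 0\<close> by (intro image_eqI[of _ _ w]) auto
qed

lemma plane_embedding_chords:
  fixes pos :: "'a \<Rightarrow> real"
  assumes inj: "inj_on pos V" and "E \<subseteq> V \<times> V" and "irrefl E"
    and noncrossing: "\<forall>(u, v)\<in>E. \<forall>(x, y)\<in>E. \<not> intervals_cross
          (min (pos u) (pos v)) (max (pos u) (pos v)) (min (pos x) (pos y)) (max (pos x) (pos y))"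
  shows "plane_embedding V E (\<lambda>v. point (pos v) 0) (chord_path pos)"
  unfolding plane_embedding_def
proof (intro conjI)
  have edge: "u \<noteq> v" "u \<in> V" "v \<in> V" if "(u, v) \<in> E" for u v
    using that assms(2,3) by (auto simp: irrefl_def)
  have pos_ne: "pos u \<noteq> pos v" if "(u, v) \<in> E" for u v
    using edge[OF that] inj by (auto dest: inj_onD)
  show "inj_on (\<lambda>v. point (pos v) 0) V"
    using inj by (simp add: inj_on_def)
  show "\<forall>(u, v)\<in>E. arc (chord_path pos u v) \<and> pathstart (chord_path pos u v) = point (pos u) 0
      \<and> pathfinish (chord_path pos u v) = point (pos v) 0
      \<and> path_image (chord_path pos v u) = path_image (chord_path pos u v)"
  proof clarify
    fix u v assume uv: "(u, v) \<in> E"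
    show "arc (chord_path pos u v) \<and> pathstart (chord_path pos u v) = point (pos u) 0
      \<and> pathfinish (chord_path pos u v) = point (pos v) 0
      \<and> path_image (chord_path pos v u) = path_image (chord_path pos u v)"
      using arc_chord_path[of pos u v] pathstart_chord_path[of pos u v] pathfinish_chord_path[of pos u v]
        path_image_chord_path_commute[of pos u v] pos_ne[OF uv]
      by simp
  qed
  show "\<forall>(u, v)\<in>E. \<forall>w\<in>V. w \<noteq> u \<and> w \<noteq> v \<longrightarrow> point (pos w) 0 \<notin> path_image (chord_path pos u v)"
  proof clarify
    fix u v w assume uv: "(u, v) \<in> E" and w: "w \<in> V" "w \<noteq> u" "w \<noteq> v"
      and on_path: "point (pos w) 0 \<in> path_image (chord_path pos u v)"
    have "pos w = pos u \<or> pos w = pos v"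
      by (rule axis_point_on_chord_path[OF pos_ne[OF uv] on_path])
    then show False
      using w inj edge[OF uv] by (auto dest: inj_onD)
  qed
  show "\<forall>(u, v)\<in>E. \<forall>(x, y)\<in>E. {u, v} \<noteq> {x, y} \<longrightarrow>
      path_image (chord_path pos u v) \<inter> path_image (chord_path pos x y) \<subseteq> (\<lambda>v. point (pos v) 0) ` ({u, v} \<inter> {x, y})"
  proof clarify
    fix u v x y z assume uv: "(u, v) \<in> E" and xy: "(x, y) \<in> E" and "{u, v} \<noteq> {x, y}"
      and z: "z \<in> path_image (chord_path pos u v)" "z \<in> path_image (chord_path pos x y)"
    have "inj_on pos {u, v, x, y}"
      using edge[OF uv] edge[OF xy] by (intro inj_on_subset[OF inj]) auto
    moreover have "\<not> intervals_cross
        (min (pos u) (pos v)) (max (pos u) (pos v)) (min (pos x) (pos y)) (max (pos x) (pos y))"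
      using noncrossing uv xy by fast
    ultimately have "path_image (chord_path pos u v) \<inter> path_image (chord_path pos x y)
        \<subseteq> (\<lambda>v. point (pos v) 0) ` ({u, v} \<inter> {x, y})"
      using edge(1)[OF uv] edge(1)[OF xy] \<open>{u, v} \<noteq> {x, y}\<close>
      by (intro chord_paths_meet_at_endpoints) auto
    then show "z \<in> (\<lambda>v. point (pos v) 0) ` ({u, v} \<inter> {x, y})"
      using z by blast
  qed
qed

lemma outerplanar_if_noncrossing_chords:
  fixes pos :: "'a \<Rightarrow> real"
  assumes "inj_on pos V" and "E \<subseteq> V \<times> V" and "irrefl E"
    and "\<forall>(u, v)\<in>E. \<forall>(x, y)\<in>E. \<not> intervals_cross
          (min (pos u) (pos v)) (max (pos u) (pos v)) (min (pos x) (pos y)) (max (pos x) (pos y))"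
  shows "outerplanar V E"
proof -
  let ?p = "\<lambda>v. point (pos v) 0"
  have "pos u \<noteq> pos v" if "(u, v) \<in> E" for u v
    using that assms(1-3) by (auto simp: irrefl_def inj_on_def)
  then have "drawing V E ?p (chord_path pos) \<subseteq> {z. 0 \<le> z $ 2}"
    by (auto simp: drawing_def path_image_chord_path dest: cap_nonneg_height)
  note outer_face = component_below_upper_halfplane_set[OF this]
  show ?thesis
    unfolding outerplanar_def
  proof (intro exI conjI ballI)
    show "plane_embedding V E ?p (chord_path pos)"
      using assms by (rule plane_embedding_chords)
  qed (use outer_face in simp_all)
qed

section \<open>Track layouts\<close>

lemma track_number_eqI:
  assumes "track_layout V E k" and "\<And>t. t < k \<Longrightarrow> \<not> track_layout V E t"
  shows "track_number V E = k"
  unfolding track_number_def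
  using assms by (intro Least_equality) (auto simp: not_less[symmetric])

lemma track_layout_by_linorder:
  fixes V :: "'a::linorder set"
  assumes "\<forall>v\<in>V. trk v < t" and "\<forall>(u, v)\<in>E. trk u \<noteq> trk v"
    and "\<forall>(u, v)\<in>E. \<forall>(x, y)\<in>E. trk u = trk x \<longrightarrow> trk v = trk y \<longrightarrow> \<not> (u < x \<and> y < v)"
  shows "track_layout V E t"
proof -
  define ord where "ord i = {(a, b). a \<in> V \<and> b \<in> V \<and> trk a = i \<and> trk b = i \<and> a < b}" for i
  have "ord i \<subseteq> {v\<in>V. trk v = i} \<times> {v\<in>V. trk v = i}
          \<and> strict_linear_order_on {v\<in>V. trk v = i} (ord i)" for i
    by (auto simp: ord_def strict_linear_order_on_def trans_def irrefl_def total_on_def)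
  moreover have "\<not> ((u, x) \<in> ord (trk u) \<and> (y, v) \<in> ord (trk v))"
    if "(u, v) \<in> E" "(x, y) \<in> E" "trk u = trk x" "trk v = trk y" for u v x y
    using assms(3) that by (fastforce simp: ord_def)
  ultimately show ?thesis
    unfolding track_layout_def
    by (intro exI[of _ trk] exI[of _ ord]) (use assms(1,2) in blast)
qed

lemma track_layoutE:
  assumes "track_layout V E t"
  obtains trk :: "'a \<Rightarrow> nat" and before :: "'a \<Rightarrow> 'a \<Rightarrow> bool"
  where "\<forall>v\<in>V. trk v < t" and "\<forall>(u, v)\<in>E. trk u \<noteq> trk v"
    and "\<forall>a\<in>V. \<forall>b\<in>V. a \<noteq> b \<longrightarrow> trk a = trk b \<longrightarrow> before a b \<or> before b a"
    and "\<forall>(u, v)\<in>E. \<forall>(x, y)\<in>E. trk u = trk x \<longrightarrow> trk v = trk y \<longrightarrow> \<not> (before u x \<and> before y v)"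
proof -
  obtain trk :: "'a \<Rightarrow> nat" and ord where
    tracks: "\<forall>v\<in>V. trk v < t" and proper: "\<forall>(u, v)\<in>E. trk u \<noteq> trk v"
    and orders: "\<forall>i<t. ord i \<subseteq> {v\<in>V. trk v = i} \<times> {v\<in>V. trk v = i}
                   \<and> strict_linear_order_on {v\<in>V. trk v = i} (ord i)"
    and no_X: "\<forall>u v x y. (u, v) \<in> E \<longrightarrow> (x, y) \<in> E \<longrightarrow> trk u = trk x \<longrightarrow> trk v = trk y
                 \<longrightarrow> trk u \<noteq> trk v \<longrightarrow> \<not> ((u, x) \<in> ord (trk u) \<and> (y, v) \<in> ord (trk v))"
    using assms unfolding track_layout_def by blast
  let ?before = "\<lambda>a b. (a, b) \<in> ord (trk a)"
  have "\<forall>a\<in>V. \<forall>b\<in>V. a \<noteq> b \<longrightarrow> trk a = trk b \<longrightarrow> ?before a b \<or> ?before b a"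
    using tracks orders by (auto simp: strict_linear_order_on_def total_on_def)
  moreover have "\<forall>(u, v)\<in>E. \<forall>(x, y)\<in>E. trk u = trk x \<longrightarrow> trk v = trk y \<longrightarrow> \<not> (?before u x \<and> ?before y v)"
    using no_X proper by fastforce
  ultimately show thesis
    by (rule that[OF tracks proper])
qed

definition G_edge_list :: "(nat \<times> nat) list" where
  "G_edge_list =
    [(0, 1), (0, 3), (0, 4), (0, 8), (0, 11), (1, 2), (1, 3), (2, 3), (3, 4), (4, 5), (4, 7),
     (4, 8), (5, 6), (5, 7), (6, 7), (7, 8), (8, 9), (8, 11), (9, 10), (9, 11), (10, 11)]"

definition G_vertices :: "nat set" where
  "G_vertices = {..<12}"

definition G_edges :: "(nat \<times> nat) set" where
  "G_edges = {(u, v). (u, v) \<in> set G_edge_list \<or> (v, u) \<in> set G_edge_list}"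

lemma G_edges_subset: "G_edges \<subseteq> G_vertices \<times> G_vertices"
  by (auto simp: G_edges_def G_edge_list_def G_vertices_def)

lemma irrefl_G_edges: "irrefl G_edges"
proof -
  have "\<forall>(u, v)\<in>set G_edge_list. u \<noteq> v"
    by (simp add: G_edge_list_def)
  then show ?thesis
    by (auto simp: irrefl_def G_edges_def)
qed

lemma simple_graph_G: "simple_graph G_vertices G_edges"
  unfolding simple_graph_def
  using G_edges_subset irrefl_G_edges by (auto simp: G_vertices_def sym_def G_edges_def)

lemma outerplanar_G: "outerplanar G_vertices G_edges"
proof (rule outerplanar_if_noncrossing_chords[where pos = real])
  have "\<forall>(u, v)\<in>set G_edge_list. \<forall>(x, y)\<in>set G_edge_list. \<not> intervals_cross u v x y \<and> u < v"
    by (simp add: G_edge_list_def intervals_cross_def)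
  then show "\<forall>(u, v)\<in>G_edges. \<forall>(x, y)\<in>G_edges. \<not> intervals_cross (min (real u) (real v))
      (max (real u) (real v)) (min (real x) (real y)) (max (real x) (real y))"
    by (auto simp: G_edges_def intervals_cross_def min_def max_def)
qed (simp_all add: G_edges_subset irrefl_G_edges)

definition five_tracks :: "nat \<Rightarrow> nat" where
  "five_tracks v = [3, 0, 2, 4, 0, 4, 0, 2, 1, 0, 4, 2] ! v"

lemma five_track_layout_G: "track_layout G_vertices G_edges 5"
proof (rule track_layout_by_linorder[where trk = five_tracks])
  have "\<forall>v\<in>set [0..<12]. five_tracks v < 5"
    by code_simp
  then show "\<forall>v\<in>G_vertices. five_tracks v < 5"
    by (simp add: G_vertices_def atLeast_upt)
  have "\<forall>(u, v)\<in>set G_edge_list. five_tracks u \<noteq> five_tracks v"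
    by code_simp
  then show "\<forall>(u, v)\<in>G_edges. five_tracks u \<noteq> five_tracks v"
    by (auto simp: G_edges_def)
  let ?ok = "\<lambda>u v x y. five_tracks u = five_tracks x \<longrightarrow> five_tracks v = five_tracks y \<longrightarrow> \<not> (u < x \<and> y < v)"
  have "\<forall>(u, v)\<in>set G_edge_list. \<forall>(x, y)\<in>set G_edge_list.
      ?ok u v x y \<and> ?ok v u x y \<and> ?ok u v y x \<and> ?ok v u y x"
    by code_simp
  then show "\<forall>(u, v)\<in>G_edges. \<forall>(x, y)\<in>G_edges. ?ok u v x y"
    unfolding G_edges_def by fast
qed

text \<open>An unsatisfiable core of the propositional problem of \<open>no_four_track_assignment_G\<close>,
  found with an external SAT solver: the X-crossing constraints for these pairs of edges and the
  totality constraints for these pairs of vertices already exclude every 4-track assignment.\<close>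

definition crossing_certificate :: "((nat \<times> nat) \<times> (nat \<times> nat)) list" where
  "crossing_certificate =
    [((0, 1), (5, 4)), ((0, 1), (5, 7)), ((0, 1), (7, 4)), ((0, 1), (7, 8)), ((0, 1), (9, 8)), ((0, 1), (9, 11)),
     ((0, 3), (5, 7)), ((0, 3), (6, 5)), ((0, 3), (6, 7)), ((0, 3), (7, 8)), ((0, 3), (9, 11)), ((0, 4), (2, 1)),
     ((0, 4), (9, 10)), ((0, 4), (9, 11)), ((0, 8), (6, 5)), ((0, 8), (9, 10)), ((1, 0), (4, 5)), ((1, 0), (4, 7)),
     ((1, 0), (7, 5)), ((1, 0), (8, 7)), ((1, 0), (8, 9)), ((1, 0), (11, 9)), ((1, 2), (4, 8)), ((1, 2), (11, 0)),
     ((1, 2), (11, 8)), ((1, 3), (4, 5)), ((1, 3), (4, 8)), ((1, 3), (7, 5)), ((1, 3), (7, 8)), ((1, 3), (8, 7)),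
     ((1, 3), (8, 9)), ((1, 3), (11, 9)), ((2, 1), (0, 11)), ((2, 1), (8, 4)), ((2, 1), (8, 11)), ((2, 3), (8, 11)),
     ((3, 0), (5, 6)), ((3, 0), (7, 5)), ((3, 0), (7, 6)), ((3, 0), (8, 7)), ((3, 0), (8, 9)), ((3, 0), (11, 9)),
     ((3, 1), (5, 4)), ((3, 1), (5, 7)), ((3, 1), (7, 4)), ((3, 1), (7, 8)), ((3, 1), (8, 4)), ((3, 1), (8, 7)),
     ((3, 1), (9, 8)), ((3, 1), (9, 11)), ((3, 1), (11, 8)), ((3, 2), (11, 0)), ((3, 2), (11, 8)), ((3, 4), (5, 6)),
     ((3, 4), (7, 6)), ((3, 4), (8, 9)), ((3, 4), (8, 11)), ((3, 4), (9, 11)), ((4, 0), (1, 2)), ((4, 0), (10, 9)),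
     ((4, 0), (11, 9)), ((4, 3), (6, 5)), ((4, 3), (6, 7)), ((4, 3), (9, 8)), ((4, 3), (9, 11)), ((4, 3), (11, 8)),
     ((4, 3), (11, 9)), ((4, 5), (9, 11)), ((4, 5), (11, 0)), ((4, 5), (11, 8)), ((4, 7), (9, 11)), ((4, 7), (10, 9)),
     ((4, 7), (10, 11)), ((4, 7), (11, 0)), ((4, 8), (6, 5)), ((5, 4), (0, 11)), ((5, 4), (8, 9)), ((5, 4), (8, 11)),
     ((5, 4), (11, 9)), ((5, 7), (8, 0)), ((5, 7), (8, 11)), ((5, 7), (11, 0)), ((5, 7), (11, 9)), ((7, 4), (0, 11)),
     ((7, 4), (3, 1)), ((7, 4), (9, 10)), ((7, 4), (11, 9)), ((7, 4), (11, 10)), ((7, 5), (0, 8)), ((7, 5), (0, 11)),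
     ((7, 5), (9, 8)), ((7, 5), (9, 11)), ((7, 5), (11, 0)), ((7, 5), (11, 8)), ((7, 8), (9, 10)), ((7, 8), (11, 10)),
     ((8, 0), (5, 6)), ((8, 0), (10, 9)), ((8, 4), (5, 6)), ((8, 7), (10, 9)), ((8, 7), (10, 11)), ((8, 9), (3, 0)),
     ((8, 9), (5, 4)), ((9, 8), (7, 5)), ((9, 11), (4, 3)), ((11, 0), (3, 2)), ((11, 0), (7, 5)), ((11, 8), (3, 1))]"

definition same_track_certificate :: "(nat \<times> nat) list" where
  "same_track_certificate =
    [(0, 2), (0, 5), (0, 6), (0, 7), (0, 9), (1, 4), (1, 7), (1, 8), (1, 11), (2, 8), (3, 5), (3, 7),
     (3, 8), (3, 9), (3, 11), (4, 6), (4, 9), (4, 10), (4, 11), (5, 8), (5, 11), (7, 9), (7, 11), (8, 10)]"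

lemma no_four_track_assignment_G:
  fixes trk :: "nat \<Rightarrow> nat" and before :: "nat \<Rightarrow> nat \<Rightarrow> bool"
  assumes tracks: "\<forall>v\<in>G_vertices. trk v < 4"
    and proper: "\<forall>(u, v)\<in>G_edges. trk u \<noteq> trk v"
    and total: "\<forall>a\<in>G_vertices. \<forall>b\<in>G_vertices. a \<noteq> b \<longrightarrow> trk a = trk b \<longrightarrow> before a b \<or> before b a"
    and no_X: "\<forall>(u, v)\<in>G_edges. \<forall>(x, y)\<in>G_edges.
                 trk u = trk x \<longrightarrow> trk v = trk y \<longrightarrow> \<not> (before u x \<and> before y v)"
  shows False
proof -
  have "set G_edge_list \<subseteq> G_vertices \<times> G_vertices"
    by (simp add: G_edge_list_def G_vertices_def)
  moreover have "trk w = 0 \<or> trk w = 1 \<or> trk w = 2 \<or> trk w = 3" if "w \<in> G_vertices" for w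
    using tracks that by (auto simp: numeral_eq_Suc less_Suc_eq)
  ultimately have vertex_clauses:
    "\<forall>(u, v)\<in>set G_edge_list. \<forall>w\<in>{u, v}. trk w = 0 \<or> trk w = 1 \<or> trk w = 2 \<or> trk w = 3"
    by (simp add: subset_iff) blast
  have edge_clauses: "\<forall>(u, v)\<in>set G_edge_list. \<forall>k\<in>{0, 1, 2, 3}. \<not> (trk u = k \<and> trk v = k)"
    using proper unfolding G_edges_def by blast
  have "set same_track_certificate \<subseteq> {(a, b). a \<in> G_vertices \<and> b \<in> G_vertices \<and> a \<noteq> b}"
    by (simp add: same_track_certificate_def G_vertices_def)
  then have same_track_clauses: "\<forall>(a, b)\<in>set same_track_certificate. \<forall>k\<in>{0, 1, 2, 3}.
      trk a = k \<longrightarrow> trk b = k \<longrightarrow> before a b \<or> before b a"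
    using total by fastforce
  have "set crossing_certificate \<subseteq> G_edges \<times> G_edges"
    by (simp add: crossing_certificate_def G_edges_def G_edge_list_def)
  then have crossing_clauses: "\<forall>((u, v), (x, y))\<in>set crossing_certificate. \<forall>i\<in>{0, 1, 2, 3}. \<forall>j\<in>{0, 1, 2, 3}.
      trk u = i \<longrightarrow> trk x = i \<longrightarrow> trk v = j \<longrightarrow> trk y = j \<longrightarrow> \<not> (before u x \<and> before y v)"
    using no_X by fastforce
  show False
    using vertex_clauses[unfolded G_edge_list_def list.set ball_simps prod.case]
      edge_clauses[unfolded G_edge_list_def list.set ball_simps prod.case]
      same_track_clauses[unfolded same_track_certificate_def list.set ball_simps prod.case]
      crossing_clauses[unfolded crossing_certificate_def list.set ball_simps prod.case]
    by sat
qed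

lemma not_four_track_layout_G:
  assumes "t \<le> 4"
  shows "\<not> track_layout G_vertices G_edges t"
proof
  assume "track_layout G_vertices G_edges t"
  then obtain trk :: "nat \<Rightarrow> nat" and before where tracks: "\<forall>v\<in>G_vertices. trk v < t"
    and layout: "\<forall>(u, v)\<in>G_edges. trk u \<noteq> trk v"
      "\<forall>a\<in>G_vertices. \<forall>b\<in>G_vertices. a \<noteq> b \<longrightarrow> trk a = trk b \<longrightarrow> before a b \<or> before b a"
      "\<forall>(u, v)\<in>G_edges. \<forall>(x, y)\<in>G_edges. trk u = trk x \<longrightarrow> trk v = trk y \<longrightarrow> \<not> (before u x \<and> before y v)"
    by (rule track_layoutE)
  from tracks assms have "\<forall>v\<in>G_vertices. trk v < 4"
    by fastforce
  from this layout show False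
    by (rule no_four_track_assignment_G)
qed

theorem theorem9:
  shows "\<exists>(V :: nat set) E. simple_graph V E \<and> outerplanar V E \<and> track_number V E = 5"
proof (intro exI conjI)
  show "simple_graph G_vertices G_edges"
    by (rule simple_graph_G)
  show "outerplanar G_vertices G_edges"
    by (rule outerplanar_G)
  show "track_number G_vertices G_edges = 5"
    using five_track_layout_G not_four_track_layout_G by (intro track_number_eqI) auto
qed

end
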